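(* Let $D$ be a consistent domain, let $(M,s)$ be a state, let $a$ be a world-altering action that is executable in $(M,s)$, and let $\Phi^w_D(a,(M,s))=\{(M',s')\}$. Then: (1) for every world $r(a,u)\in M'[S]\setminus M[S]$ and every literal $\ell\in e_D(a,M,u)$, we have $(M',r(a,u))\models \ell$; (2) for every world $r(a,u)\in M'[S]\setminus M[S]$ and every fluent $f\in\mathcal F$ such that neither $f$ nor $\neg f$ belongs to $e_D(a,M,u)$, we have $(M,u)\models f$ iff $(M',r(a,u))\models f$; (3) for every agent $i\in O_D(a,M,s)$ and every belief formula $\varphi$, $(M',s')\models \mathbf B_i\varphi$ iff $(M,s)\models\mathbf B_i\varphi$.
   Context: Fix a finite set of agents $\mathcal{AG}=\{1,\dots,n\}$, a set $\mathcal F$ of fluents (propositional variables) and a set of actions. Fluent formulae are propositional formulae over $\mathcal F$; a fluent literal is $f$ or $\neg f$ for $f\in\mathcal F$. Belief formulae are built from fluent formulae using $\mathbf B_i\varphi$ ($i\in\mathcal{AG}$), the Boolean connectives, and $\mathbf E_\alpha\varphi$, $\mathbf C_\alpha\varphi$ for nonempty $\alpha\subseteq\mathcal{AG}$. A Kripke structure $M=\langle S,\pi,\mathcal B_1,\dots,\mathcal B_n\rangle$ has a set of worlds $M[S]=S$, an interpretation $M[\pi](u)\subseteq\mathcal F$ of each world, and relations $M[i]=\mathcal B_i\subseteq S\times S$. A state is a pair $(M,s)$ with $s\in M[S]$. Satisfaction: $(M,s)\models\varphi$ for a fluent formula iff $M[\pi](s)\models\varphi$; $(M,s)\models\mathbf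 B_i\varphi$ iff $(M,t)\models\varphi$ for all $t$ with $(s,t)\in M[i]$; Boolean connectives as usual; $\mathbf E_\alpha\varphi$ holds iff $\mathbf B_i\varphi$ holds for all $i\in\alpha$; $\mathbf C_\alpha\varphi$ holds iff $\mathbf E^k_\alpha\varphi$ holds for all $k\ge0$, where $\mathbf E^0_\alpha\varphi=\varphi$, $\mathbf E^{k+1}_\alpha\varphi=\mathbf E_\alpha\mathbf E^k_\alpha\varphi$. A domain $D$ consists of: for each action $a$ exactly one statement "executable $a$ if $\psi$" ($\psi$ a belief formula; $a$ is executable in $(M,s)$ iff $(M,s)\models\psi$); for world-altering actions, statements "$a$ causes $\ell$ if $\varphi$" ($\ell$ a fluent literal, $\varphi$ a belief formula); and observability statements "$X$ observes $a$ if $\varphi$" and "$X$ aware\_of $a$ if $\varphi$" ($X$ an agent, $\varphi$ a fluent formula). $F_D(a,M,s)$ is the set of agents $X$ with some statement "$X$ observes $a$ if $\varphi$" in $D$ and $(M,s)\models\varphi$; $P_D(a,M,s)$ is defined likewise with "aware\_of"; $O_D(a,M,s)=\mathcal{AG}\setminus(F_D(a,M,s)\cup P_D(a,M,s))$. For a world-altering action $a$ and $u\in M[S]$, $e_D(a,M,u)=\{\ell\mid$ "$a$ causes $\ell$ if $\varphi$" $\in D$ and $(M,u)\models\varphi\}$. $D$ is consistent if $F_D(a,M,s)\cap P_D(a,M,s)=\emptyset$ always and every $e_D(a,M,u)$ is a consistent set of literals. Transition $\Phi^w_D$: if $a$ is executable in $(M,s)$, $\Phi^w_D(a,(M,s))=\{(M',s')\}$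 where: for every $u\in M[S]$ such that $a$ is executable in $(M,u)$ a fresh world $r(a,u)$ is created whose interpretation is obtained from $M[\pi](u)$ by making every literal of $e_D(a,M,u)$ true and leaving all other fluents unchanged; $M'[S]=M[S]\cup\{r(a,u)\}$; worlds of $M[S]$ keep their interpretations; $M'[i]$ contains $M[i]$; for $i\in F_D(a,M,s)$, $M'[i]$ additionally contains $(r(a,u),r(a,v))$ whenever $(u,v)\in M[i]$ and both $r(a,u),r(a,v)$ exist; for $i\in O_D(a,M,s)$, $M'[i]$ additionally contains $(r(a,u),v)$ whenever $r(a,u)$ exists and $(u,v)\in M[i]$; no other pairs; and $s'=r(a,s)$. *)

theory Defs
  imports Main
begin

datatype 'f fform =
    FVar 'f
  | FTrue
  | FFalse
  | FNot "'f fform"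
  | FAnd "'f fform" "'f fform"
  | FOr "'f fform" "'f fform"
  | FImp "'f fform" "'f fform"

datatype 'f lit = Pos 'f | Neg 'f

datatype ('ag, 'f) bform =
    Fl "'f fform"
  | Bel 'ag "('ag, 'f) bform"
  | BNot "('ag, 'f) bform"
  | BAnd "('ag, 'f) bform" "('ag, 'f) bform"
  | BOr "('ag, 'f) bform" "('ag, 'f) bform"
  | BImp "('ag, 'f) bform" "('ag, 'f) bform"
  | Eall "'ag set" "('ag, 'f) bform"
  | Ccom "'ag set" "('ag, 'f) bform"

fun wf_bform :: "('ag, 'f) bform \<Rightarrow> bool" where
  "wf_bform (Fl _) = True"
| "wf_bform (Bel _ p) = wf_bform p"
| "wf_bform (BNot p) = wf_bform p"
| "wf_bform (BAnd p q) = (wf_bform p \<and> wf_bform q)"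
| "wf_bform (BOr p q) = (wf_bform p \<and> wf_bform q)"
| "wf_bform (BImp p q) = (wf_bform p \<and> wf_bform q)"
| "wf_bform (Eall A p) = (A \<noteq> {} \<and> wf_bform p)"
| "wf_bform (Ccom A p) = (A \<noteq> {} \<and> wf_bform p)"

record ('w, 'ag, 'f) kripke =
  worlds :: "'w set"
  interp :: "'w \<Rightarrow> 'f set"
  rel :: "'ag \<Rightarrow> ('w \<times> 'w) set"

definition wf_kripke :: "('w, 'ag, 'f) kripke \<Rightarrow> bool" where
  "wf_kripke M \<longleftrightarrow> (\<forall>i. rel M i \<subseteq> worlds M \<times> worlds M)"

fun fsat :: "'f set \<Rightarrow> 'f fform \<Rightarrow> bool" where
  "fsat I (FVar f) = (f \<in> I)"
| "fsat I FTrue = True"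
| "fsat I FFalse = False"
| "fsat I (FNot p) = (\<not> fsat I p)"
| "fsat I (FAnd p q) = (fsat I p \<and> fsat I q)"
| "fsat I (FOr p q) = (fsat I p \<or> fsat I q)"
| "fsat I (FImp p q) = (fsat I p \<longrightarrow> fsat I q)"

text \<open>E^k_alpha applied to a semantic predicate: satEk M A k P w holds iff
  (M,w) satisfies E^k_A of a formula whose extension is P.\<close>
fun satEk :: "('w, 'ag, 'f) kripke \<Rightarrow> 'ag set \<Rightarrow> nat \<Rightarrow> ('w \<Rightarrow> bool) \<Rightarrow> 'w \<Rightarrow> bool" where
  "satEk M A 0 P w = P w"
| "satEk M A (Suc k) P w = (\<forall>i\<in>A. \<forall>v. (w, v) \<in> rel M i \<longrightarrow> satEk M A k P v)"

fun sat :: "('w, 'ag, 'f) kripke \<Rightarrow> 'w \<Rightarrow> ('ag, 'f) bform \<Rightarrow> bool" where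
  "sat M w (Fl p) = fsat (interp M w) p"
| "sat M w (Bel i p) = (\<forall>v. (w, v) \<in> rel M i \<longrightarrow> sat M v p)"
| "sat M w (BNot p) = (\<not> sat M w p)"
| "sat M w (BAnd p q) = (sat M w p \<and> sat M w q)"
| "sat M w (BOr p q) = (sat M w p \<or> sat M w q)"
| "sat M w (BImp p q) = (sat M w p \<longrightarrow> sat M w q)"
| "sat M w (Eall A p) = (\<forall>i\<in>A. \<forall>v. (w, v) \<in> rel M i \<longrightarrow> sat M v p)"
| "sat M w (Ccom A p) = (\<forall>k. satEk M A k (\<lambda>v. sat M v p) w)"

fun lsat :: "('w, 'ag, 'f) kripke \<Rightarrow> 'w \<Rightarrow> 'f lit \<Rightarrow> bool" where
  "lsat M w (Pos f) = (f \<in> interp M w)"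
| "lsat M w (Neg f) = (f \<notin> interp M w)"

text \<open>A domain: exactly one executability condition per action, a set of
  world-altering actions, causal laws (a causes l if phi), and observability
  statements (X observes a if phi), (X aware_of a if phi).\<close>
record ('act, 'ag, 'f) domain =
  exec_cond :: "'act \<Rightarrow> ('ag, 'f) bform"
  world_altering :: "'act set"
  causes :: "('act \<times> 'f lit \<times> ('ag, 'f) bform) set"
  observes :: "('act \<times> 'ag \<times> 'f fform) set"
  aware_of :: "('act \<times> 'ag \<times> 'f fform) set"

definition executable :: "('act, 'ag, 'f) domain \<Rightarrow> 'act \<Rightarrow> ('w, 'ag, 'f) kripke \<Rightarrow> 'w \<Rightarrow> bool" where
  "executable D a M s \<longleftrightarrow> sat M s (exec_cond D a)"

definition F_D :: "('act, 'ag, 'f) domain \<Rightarrow> 'act \<Rightarrow> ('w, 'ag, 'f) kripke \<Rightarrow> 'w \<Rightarrow> 'ag set" where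
  "F_D D a M s = {X. \<exists>\<phi>. (a, X, \<phi>) \<in> observes D \<and> sat M s (Fl \<phi>)}"

definition P_D :: "('act, 'ag, 'f) domain \<Rightarrow> 'act \<Rightarrow> ('w, 'ag, 'f) kripke \<Rightarrow> 'w \<Rightarrow> 'ag set" where
  "P_D D a M s = {X. \<exists>\<phi>. (a, X, \<phi>) \<in> aware_of D \<and> sat M s (Fl \<phi>)}"

text \<open>The agent set AG is the whole (finite) type 'ag.\<close>
definition O_D :: "('act, 'ag, 'f) domain \<Rightarrow> 'act \<Rightarrow> ('w, 'ag, 'f) kripke \<Rightarrow> 'w \<Rightarrow> 'ag set" where
  "O_D D a M s = UNIV - (F_D D a M s \<union> P_D D a M s)"

definition e_D :: "('act, 'ag, 'f) domain \<Rightarrow> 'act \<Rightarrow> ('w, 'ag, 'f) kripke \<Rightarrow> 'w \<Rightarrow> 'f lit set" where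
  "e_D D a M u = {l. \<exists>\<phi>. (a, l, \<phi>) \<in> causes D \<and> sat M u \<phi>}"

definition consistent_lits :: "'f lit set \<Rightarrow> bool" where
  "consistent_lits L \<longleftrightarrow> (\<forall>f. \<not> (Pos f \<in> L \<and> Neg f \<in> L))"

text \<open>Consistency of a domain, quantified over all (well-formed) Kripke
  structures whose worlds have type 'w.\<close>
definition consistent_domain :: "('act, 'ag, 'f) domain \<Rightarrow> 'w itself \<Rightarrow> bool" where
  "consistent_domain D (_ :: 'w itself) \<longleftrightarrow>
     (\<forall>a (M :: ('w, 'ag, 'f) kripke). wf_kripke M \<longrightarrow>
        (\<forall>s \<in> worlds M. F_D D a M s \<inter> P_D D a M s = {}) \<and>
        (\<forall>u \<in> worlds M. consistent_lits (e_D D a M u)))"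

definition update_interp :: "'f lit set \<Rightarrow> 'f set \<Rightarrow> 'f set" where
  "update_interp L I = (I - {f. Neg f \<in> L}) \<union> {f. Pos f \<in> L}"

text \<open>Fresh world names: r a u is the fresh world r(a,u). The naming function is
  required to be injective on M[S] and to avoid M[S].\<close>
definition fresh_naming :: "('act \<Rightarrow> 'w \<Rightarrow> 'w) \<Rightarrow> 'act \<Rightarrow> ('w, 'ag, 'f) kripke \<Rightarrow> bool" where
  "fresh_naming r a M \<longleftrightarrow> inj_on (r a) (worlds M) \<and> r a ` worlds M \<inter> worlds M = {}"

definition Phi_w :: "('act, 'ag, 'f) domain \<Rightarrow> 'act \<Rightarrow> ('w, 'ag, 'f) kripke \<Rightarrow> 'w
    \<Rightarrow> ('act \<Rightarrow> 'w \<Rightarrow> 'w) \<Rightarrow> ('w, 'ag, 'f) kripke \<times> 'w" where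
  "Phi_w D a M s r =
    (let X = {u \<in> worlds M. executable D a M u};
         orig = (\<lambda>w. THE u. u \<in> X \<and> r a u = w)
     in (\<lparr> worlds = worlds M \<union> r a ` X,
           interp = (\<lambda>w. if w \<in> r a ` X
                         then update_interp (e_D D a M (orig w)) (interp M (orig w))
                         else interp M w),
           rel = (\<lambda>i. rel M i
                    \<union> (if i \<in> F_D D a M s
                       then {(r a u, r a v) | u v. (u, v) \<in> rel M i \<and> u \<in> X \<and> v \<in> X}
                       else {})
                    \<union> (if i \<in> O_D D a M s
                       then {(r a u, v) | u v. (u, v) \<in> rel M i \<and> u \<in> X}
                       else {})) \<rparr>,
         r a s))"

end

theory Submission
  imports Defs
begin

text \<open>Parts (1) and (2) hold because the fresh copy r(a,u) carries the interpretation of u updated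
  by e_D(a,M,u), which makes every literal of this consistent set true and leaves all other fluents
  alone. For (3), M' gives the old worlds the same interpretation and the same successors as M,
  and the old worlds are closed under every M[i]; so truth at old worlds is unchanged. An oblivious agent i has, from r(a,s),
  exactly the i-successors of s in M, all of them old worlds, so B_i phi means the same at s'
  in M' as at s in M.\<close>

lemma satEk_cong_closed:
  assumes rel_eq: "\<And>w v i. w \<in> W \<Longrightarrow> (w, v) \<in> rel M' i \<longleftrightarrow> (w, v) \<in> rel M i"
    and closed: "\<And>w v i. (w, v) \<in> rel M i \<Longrightarrow> v \<in> W"
    and pred_eq: "\<And>w. w \<in> W \<Longrightarrow> P' w = P w"
    and "w \<in> W"
  shows "satEk M' A k P' w = satEk M A k P w"
  using \<open>w \<in> W\<close>
proof (induction k arbitrary: w)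
  case 0
  then show ?case using pred_eq by simp
next
  case (Suc k)
  then show ?case using rel_eq closed by (auto; blast)
qed

lemma sat_cong_closed:
  assumes rel_eq: "\<And>w v i. w \<in> W \<Longrightarrow> (w, v) \<in> rel M' i \<longleftrightarrow> (w, v) \<in> rel M i"
    and closed: "\<And>w v i. (w, v) \<in> rel M i \<Longrightarrow> v \<in> W"
    and interp_eq: "\<And>w. w \<in> W \<Longrightarrow> interp M' w = interp M w"
    and "w \<in> W"
  shows "sat M' w \<phi> = sat M w \<phi>"
  using \<open>w \<in> W\<close>
proof (induction \<phi> arbitrary: w)
  case (Ccom A p)
  have "satEk M' A k (\<lambda>v. sat M' v p) w = satEk M A k (\<lambda>v. sat M v p) w" for k
    by (rule satEk_cong_closed[OF rel_eq closed]) (use Ccom in auto)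
  then show ?case by simp
qed (use rel_eq closed interp_eq in \<open>auto; blast\<close>)+

lemma lit_true_update_interp:
  assumes "consistent_lits L" "l \<in> L" "interp M w = update_interp L I"
  shows "lsat M w l"
  using assms by (cases l) (auto simp: update_interp_def consistent_lits_def)

lemma update_interp_inertia:
  assumes "Pos f \<notin> L" "Neg f \<notin> L"
  shows "f \<in> update_interp L I \<longleftrightarrow> f \<in> I"
  using assms by (auto simp: update_interp_def)

lemma consistent_domain_e_D:
  assumes "consistent_domain D TYPE('w)" "wf_kripke (M :: ('w, 'ag, 'f) kripke)" "u \<in> worlds M"
  shows "consistent_lits (e_D D a M u)"
  using assms unfolding consistent_domain_def by blast

lemma Phi_w_state: "snd (Phi_w D a M s r) = r a s"
  by (simp add: Phi_w_def Let_def)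

lemma Phi_w_worlds:
  "worlds (fst (Phi_w D a M s r)) = worlds M \<union> r a ` {u \<in> worlds M. executable D a M u}"
  by (simp add: Phi_w_def Let_def)

context
  fixes D :: "('act, 'ag, 'f) domain" and a :: 'act and M :: "('w, 'ag, 'f) kripke"
    and s :: 'w and r :: "'act \<Rightarrow> 'w \<Rightarrow> 'w"
  assumes fresh: "fresh_naming r a M"
begin

private abbreviation "M' \<equiv> fst (Phi_w D a M s r)"

lemma Phi_w_fresh_world_executable:
  assumes "u \<in> worlds M" "r a u \<in> worlds M' - worlds M"
  shows "executable D a M u"
proof -
  obtain v where v: "v \<in> worlds M" "executable D a M v" "r a u = r a v"
    using assms(2) by (auto simp: Phi_w_worlds)
  then have "u = v"
    using fresh assms(1) by (auto simp: fresh_naming_def dest: inj_onD)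
  with v show ?thesis by simp
qed

lemma Phi_w_interp_fresh:
  assumes "u \<in> worlds M" "executable D a M u"
  shows "interp M' (r a u) = update_interp (e_D D a M u) (interp M u)"
proof -
  let ?X = "{u \<in> worlds M. executable D a M u}"
  have "(THE v. v \<in> ?X \<and> r a v = r a u) = u"
    by (rule the_equality) (use assms fresh in \<open>auto simp: fresh_naming_def dest: inj_onD\<close>)
  then show ?thesis using assms by (simp add: Phi_w_def Let_def)
qed

lemma Phi_w_interp_old:
  assumes "w \<in> worlds M"
  shows "interp M' w = interp M w"
  using assms fresh by (auto simp: Phi_w_def Let_def fresh_naming_def)

lemma Phi_w_rel_old:
  assumes "w \<in> worlds M"
  shows "(w, v) \<in> rel M' i \<longleftrightarrow> (w, v) \<in> rel M i"
  using assms fresh by (auto simp: Phi_w_def Let_def fresh_naming_def)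

lemma Phi_w_sat_old:
  assumes "wf_kripke M" "w \<in> worlds M"
  shows "sat M' w \<phi> = sat M w \<phi>"
proof (rule sat_cong_closed[where W = "worlds M"])
  show "\<And>w v i. (w, v) \<in> rel M i \<Longrightarrow> v \<in> worlds M"
    using \<open>wf_kripke M\<close> by (auto simp: wf_kripke_def)
qed (use assms Phi_w_rel_old Phi_w_interp_old in auto)

text \<open>Only the oblivious clause of the transition contributes edges (r(a,u), v) into old worlds;
  well-formedness of M rules out that such an edge is already in M[i].\<close>
lemma Phi_w_rel_oblivious:
  assumes "wf_kripke M" "i \<in> O_D D a M s" "u \<in> worlds M" "executable D a M u"
  shows "(r a u, v) \<in> rel M' i \<longleftrightarrow> (u, v) \<in> rel M i"
proof
  assume edge: "(r a u, v) \<in> rel M' i"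
  have fresh_u: "r a u \<notin> worlds M"
    using fresh assms(3) by (auto simp: fresh_naming_def)
  then have "(r a u, v) \<notin> rel M i"
    using \<open>wf_kripke M\<close> by (auto simp: wf_kripke_def)
  moreover have "i \<notin> F_D D a M s"
    using assms(2) by (simp add: O_D_def)
  ultimately obtain u' where "(u', v) \<in> rel M i" "u' \<in> worlds M" "r a u' = r a u"
    using edge assms(2) by (auto simp: Phi_w_def Let_def)
  moreover have "u' = u"
    using calculation assms(3) fresh by (auto simp: fresh_naming_def dest: inj_onD)
  ultimately show "(u, v) \<in> rel M i" by simp
next
  assume "(u, v) \<in> rel M i"
  then show "(r a u, v) \<in> rel M' i"
    using assms(2-4) by (auto simp: Phi_w_def Let_def)
qed

lemma Phi_w_Bel_oblivious:
  assumes "wf_kripke M" "i \<in> O_D D a M s" "s \<in> worlds M" "executable D a M s"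
  shows "sat M' (r a s) (Bel i \<phi>) \<longleftrightarrow> sat M s (Bel i \<phi>)"
proof -
  have "sat M' v \<phi> = sat M v \<phi>" if "(s, v) \<in> rel M i" for v
    using that assms(1) by (intro Phi_w_sat_old) (auto simp: wf_kripke_def)
  then show ?thesis
    using Phi_w_rel_oblivious[OF assms] by auto
qed

end

theorem proposition2:
  fixes D :: "('act, 'ag :: finite, 'f) domain"
    and M M' :: "('w, 'ag, 'f) kripke"
    and s s' :: 'w
    and a :: 'act
    and r :: "'act \<Rightarrow> 'w \<Rightarrow> 'w"
  assumes "consistent_domain D TYPE('w)"
    and "wf_kripke M"
    and "s \<in> worlds M"
    and "a \<in> world_altering D"
    and "executable D a M s"
    and "fresh_naming r a M"
    and "Phi_w D a M s r = (M', s')"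
  shows "(\<forall>u \<in> worlds M. r a u \<in> worlds M' - worlds M \<longrightarrow>
            (\<forall>l \<in> e_D D a M u. lsat M' (r a u) l))
       \<and> (\<forall>u \<in> worlds M. r a u \<in> worlds M' - worlds M \<longrightarrow>
            (\<forall>f. Pos f \<notin> e_D D a M u \<and> Neg f \<notin> e_D D a M u \<longrightarrow>
               (sat M u (Fl (FVar f)) \<longleftrightarrow> sat M' (r a u) (Fl (FVar f)))))
       \<and> (\<forall>i \<in> O_D D a M s. \<forall>\<phi>. wf_bform \<phi> \<longrightarrow>
            (sat M' s' (Bel i \<phi>) \<longleftrightarrow> sat M s (Bel i \<phi>)))"
proof -
  have M': "M' = fst (Phi_w D a M s r)" and s': "s' = r a s"
    using assms(7) Phi_w_state[of D a M s r] by auto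
  have fresh_interp: "interp M' (r a u) = update_interp (e_D D a M u) (interp M u)"
    if "u \<in> worlds M" "r a u \<in> worlds M' - worlds M" for u
    using that assms(6) unfolding M'
    by (intro Phi_w_interp_fresh Phi_w_fresh_world_executable)
  show ?thesis
  proof (intro conjI ballI impI allI)
    show "lsat M' (r a u) l"
      if "u \<in> worlds M" "r a u \<in> worlds M' - worlds M" "l \<in> e_D D a M u" for u l
      using lit_true_update_interp[OF consistent_domain_e_D[OF assms(1,2)] _ fresh_interp] that
      by simp
    show "sat M u (Fl (FVar f)) \<longleftrightarrow> sat M' (r a u) (Fl (FVar f))"
      if "u \<in> worlds M" "r a u \<in> worlds M' - worlds M"
        "Pos f \<notin> e_D D a M u \<and> Neg f \<notin> e_D D a M u" for u f
      using that by (simp add: fresh_interp update_interp_inertia)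
    show "sat M' s' (Bel i \<phi>) \<longleftrightarrow> sat M s (Bel i \<phi>)" if "i \<in> O_D D a M s" for i \<phi>
      using Phi_w_Bel_oblivious[OF assms(6,2) that assms(3,5)] by (simp add: M' s')
  qed
qed

end
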